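(* Let $\alpha_1,\dots,\alpha_n\in\mathcal R^n$ and consider the smooth representation $\bigoplus_{i=1}^n\chi^{\alpha_i}$ of $(\mathbb C^* )^n$ on $\mathbb C^n$. (1) It is faithful if and only if the $n\times n$ matrix with entries in $\mathcal R$ whose $(i,k)$-entry is $\alpha_i^k$ has an inverse with entries in $\mathcal R$. (2) If it is faithful, then the representation space has only finitely many orbits and has an open dense orbit; the open dense orbit is unique and isomorphic to $(\mathbb C^* )^n$, and every other orbit has real codimension at least two.
   Context: $\mathcal R$ is the ring of real $2\times2$ matrices $\begin{bmatrix} b&0\\ c&v\end{bmatrix}$ with $b,c\in\mathbb R$, $v\in\mathbb Z$, identified with $\mathbb C\times\mathbb Z$ via $(b+\sqrt{-1}c,v)$. For $g\in\mathbb C^*$ and $\mu=(b+\sqrt{-1}c,v)$, $g^\mu:=|g|^{b+\sqrt{-1}c}(g/|g|)^v$. For $\alpha=(\alpha^1,\dots,\alpha^n)\in\mathcal R^n$, $\chi^\alpha(g_1,\dots,g_n)=\prod_k g_k^{\alpha^k}$. The representation $\bigoplus_i\chi^{\alpha_i}$ acts on $\mathbb C^n$ by $g\cdot(z_1,\dots,z_n)=(\chi^{\alpha_1}(g)z_1,\dots,\chi^{\alpha_n}(g)z_n)$. Matrices over $\mathcal R$ are multiplied as usual (equivalently as real $2n\times 2n$ matrices). *)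

theory Defs
  imports "HOL-Analysis.Analysis"
begin

text \<open>Elements of the ring R are represented as pairs (b + i c, v) :: complex * int,
  standing for the real matrix [[b,0],[c,v]].\<close>

type_synonym Relt = "complex \<times> int"

text \<open>Multiplication in R, i.e. the matrix product
  [[b,0],[c,v]] [[b',0],[c',v']] = [[b b', 0],[c b' + v c', v v']].\<close>
definition rmul :: "Relt \<Rightarrow> Relt \<Rightarrow> Relt" where
  "rmul x y = (Complex (Re (fst x) * Re (fst y))
                       (Im (fst x) * Re (fst y) + of_int (snd x) * Im (fst y)),
               snd x * snd y)"

definition rmatmul :: "('n::finite \<Rightarrow> 'n \<Rightarrow> Relt) \<Rightarrow> ('n \<Rightarrow> 'n \<Rightarrow> Relt) \<Rightarrow> ('n \<Rightarrow> 'n \<Rightarrow> Relt)" where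
  "rmatmul A B = (\<lambda>i k. ((\<Sum>j\<in>UNIV. fst (rmul (A i j) (B j k))),
                          (\<Sum>j\<in>UNIV. snd (rmul (A i j) (B j k)))))"

definition rmat_id :: "'n::finite \<Rightarrow> 'n \<Rightarrow> Relt" where
  "rmat_id = (\<lambda>i k. if i = k then (1, 1) else (0, 0))"

definition rmat_invertible :: "('n::finite \<Rightarrow> 'n \<Rightarrow> Relt) \<Rightarrow> bool" where
  "rmat_invertible A \<longleftrightarrow> (\<exists>B. rmatmul A B = rmat_id \<and> rmatmul B A = rmat_id)"

definition rpow :: "complex \<Rightarrow> Relt \<Rightarrow> complex" where
  "rpow g mu = exp (fst mu * of_real (ln (cmod g))) * (g / of_real (cmod g)) powi (snd mu)"

definition torus :: "(complex ^ 'n) set" where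
  "torus = {g. \<forall>k. g $ k \<noteq> 0}"

definition chi :: "('n::finite \<Rightarrow> Relt) \<Rightarrow> complex ^ 'n \<Rightarrow> complex" where
  "chi a g = (\<Prod>k\<in>UNIV. rpow (g $ k) (a k))"

text \<open>The representation (direct sum of the chi^{alpha_i}); \<open>al i k\<close> is alpha_i^k.\<close>
definition act :: "('n::finite \<Rightarrow> 'n \<Rightarrow> Relt) \<Rightarrow> complex ^ 'n \<Rightarrow> complex ^ 'n \<Rightarrow> complex ^ 'n" where
  "act al g z = (\<chi> i. chi (al i) g * z $ i)"

definition faithful :: "('n::finite \<Rightarrow> 'n \<Rightarrow> Relt) \<Rightarrow> bool" where
  "faithful al \<longleftrightarrow> (\<forall>g\<in>torus. (\<forall>z. act al g z = z) \<longrightarrow> g = 1)"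

definition orbit :: "('n::finite \<Rightarrow> 'n \<Rightarrow> Relt) \<Rightarrow> complex ^ 'n \<Rightarrow> (complex ^ 'n) set" where
  "orbit al z = (\<lambda>g. act al g z) ` torus"

definition orbits :: "('n::finite \<Rightarrow> 'n \<Rightarrow> Relt) \<Rightarrow> (complex ^ 'n) set set" where
  "orbits al = range (orbit al)"

end

theory Submission imports Defs begin

text \<open>
  Write an \<open>\<R>\<close>-matrix \<open>\<alpha>\<close> as the real block matrix \<open>[[B, 0], [C, V]]\<close> with \<open>V\<close> integral.
  In logarithmic coordinates \<open>g\<^sub>k = exp (x\<^sub>k + i t\<^sub>k)\<close> on the torus, the character map
  \<open>charmap \<alpha>\<close> becomes the linear map \<open>(x, t) \<mapsto> (B x, C x + V t)\<close>, and character maps compose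
  like products of \<open>\<R>\<close>-matrices.  So an inverse over \<open>\<R>\<close> yields an inverse character map and
  the action is faithful.  Conversely, faithfulness says that \<open>(B x, C x + V t) \<in> 0 \<times> 2\<pi>\<int>\<^sup>n\<close>
  only for \<open>x = 0\<close>, \<open>t \<in> 2\<pi>\<int>\<^sup>n\<close>; this forces \<open>B\<close> and \<open>V\<close> to be invertible and \<open>V\<^sup>-\<^sup>1\<close> to be
  integral, and then \<open>[[B\<^sup>-\<^sup>1, 0], [-V\<^sup>-\<^sup>1 C B\<^sup>-\<^sup>1, V\<^sup>-\<^sup>1]]\<close> is an inverse over \<open>\<R>\<close>.

  Once the character map is bijective on the torus, the orbit of \<open>z\<close> consists of all vectors
  with the same zero coordinates as \<open>z\<close>.  The torus itself is the orbit without zero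
  coordinates, open and dense; every other orbit lies in a complex coordinate hyperplane.
\<close>

lemma rpow_nonzero: "g \<noteq> 0 \<Longrightarrow> rpow g mu \<noteq> 0"
  by (simp add: rpow_def)

lemma rpow_1_base: "rpow 1 mu = 1"
  by (simp add: rpow_def)

lemma rpow_zero_exponent: "rpow g (0, 0) = 1"
  by (simp add: rpow_def)

lemma rpow_unit_exponent:
  assumes "g \<noteq> 0" shows "rpow g (1, 1) = g"
proof -
  have "exp (complex_of_real (ln (cmod g))) = complex_of_real (cmod g)"
    using assms by (simp add: exp_of_real)
  then show ?thesis using assms by (simp add: rpow_def)
qed

lemma rpow_add_exponent:
  "g \<noteq> 0 \<Longrightarrow> rpow g (a + b, m + n) = rpow g (a, m) * rpow g (b, n)"
  by (simp add: rpow_def exp_add power_int_add distrib_right)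

lemma rpow_mult_base:
  assumes "g \<noteq> 0" "h \<noteq> 0" shows "rpow (g * h) mu = rpow g mu * rpow h mu"
proof -
  have "g * h / of_real (cmod (g * h)) = (g / of_real (cmod g)) * (h / of_real (cmod h))"
    by (simp add: norm_mult)
  then have "(g * h / of_real (cmod (g * h))) powi n
      = (g / of_real (cmod g)) powi n * (h / of_real (cmod h)) powi n" for n
    by (simp only: power_int_mult_distrib)
  moreover have "exp (fst mu * of_real (ln (cmod (g * h))))
      = exp (fst mu * of_real (ln (cmod g))) * exp (fst mu * of_real (ln (cmod h)))"
    using assms by (simp add: norm_mult ln_mult distrib_left exp_add)
  ultimately show ?thesis
    by (simp add: rpow_def)
qed

lemma rpow_rpow:
  assumes "g \<noteq> 0" shows "rpow (rpow g mu) nu = rpow g (rmul nu mu)"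
proof -
  obtain b c v where mu: "mu = (Complex b c, v)" by (metis complex.exhaust prod.exhaust)
  obtain b' c' v' where nu: "nu = (Complex b' c', v')" by (metis complex.exhaust prod.exhaust)
  define L where "L = ln (cmod g)"
  define u where "u = g / of_real (cmod g)"
  have "cmod u = 1" using assms by (simp add: u_def norm_divide)
  have "Complex b c * of_real L = of_real (b * L) + \<i> * of_real (c * L)"
    by (simp add: complex_eq_iff)
  then have "exp (Complex b c * of_real L) = of_real (exp (b * L)) * exp (\<i> * of_real (c * L))"
    by (simp only: exp_add exp_of_real)
  then have "rpow g mu = of_real (exp (b * L)) * (exp (\<i> * of_real (c * L)) * u powi v)"
    by (simp add: rpow_def mu L_def u_def)
  then have "cmod (rpow g mu) = exp (b * L)"
    and "rpow g mu / of_real (exp (b * L)) = exp (\<i> * of_real (c * L)) * u powi v"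
    using \<open>cmod u = 1\<close> by (simp_all add: norm_mult norm_power_int)
  then have "rpow (rpow g mu) nu
      = exp (Complex b' c' * of_real (b * L)) * (exp (\<i> * of_real (c * L)) * u powi v) powi v'"
    by (simp add: rpow_def nu)
  also have "\<dots> = exp (Complex b' c' * of_real (b * L)) * exp (of_int v' * (\<i> * of_real (c * L)))
                   * u powi (v * v')"
    by (simp add: power_int_mult_distrib exp_power_int power_int_mult)
  also have "\<dots> = exp (Complex b' c' * of_real (b * L) + of_int v' * (\<i> * of_real (c * L)))
                   * u powi (v' * v)"
    by (simp add: exp_add mult.commute)
  also have "Complex b' c' * of_real (b * L) + of_int v' * (\<i> * of_real (c * L))
      = Complex (b' * b) (c' * b + of_int v' * c) * of_real L"
    by (simp add: complex_eq_iff algebra_simps)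
  finally show ?thesis
    by (simp add: rpow_def rmul_def mu nu L_def u_def)
qed

lemma prod_rpow_exponents:
  "finite S \<Longrightarrow> g \<noteq> 0 \<Longrightarrow>
   (\<Prod>j\<in>S. rpow g (f j)) = rpow g (\<Sum>j\<in>S. fst (f j), \<Sum>j\<in>S. snd (f j))"
proof (induction S rule: finite_induct)
  case empty
  then show ?case by (simp add: rpow_zero_exponent)
next
  case (insert x F)
  have "rpow g (f x) = rpow g (fst (f x), snd (f x))" by simp
  with insert show ?case by (simp add: rpow_add_exponent)
qed

lemma rpow_prod_base:
  "finite S \<Longrightarrow> (\<And>j. j \<in> S \<Longrightarrow> g j \<noteq> 0) \<Longrightarrow> rpow (\<Prod>j\<in>S. g j) mu = (\<Prod>j\<in>S. rpow (g j) mu)"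
  by (induction S rule: finite_induct) (simp_all add: rpow_1_base rpow_mult_base)

definition charmap :: "('n::finite \<Rightarrow> 'n \<Rightarrow> Relt) \<Rightarrow> complex ^ 'n \<Rightarrow> complex ^ 'n" where
  "charmap A g = (\<chi> i. chi (A i) g)"

lemma act_nth: "act al g z $ i = charmap al g $ i * z $ i"
  by (simp add: act_def charmap_def)

lemma chi_nonzero: "g \<in> torus \<Longrightarrow> chi a g \<noteq> 0"
  by (simp add: chi_def torus_def rpow_nonzero)

lemma charmap_in_torus: "g \<in> torus \<Longrightarrow> charmap A g \<in> torus"
  by (simp add: charmap_def torus_def chi_nonzero)

lemma charmap_1: "charmap A 1 = 1"
  by (simp add: charmap_def chi_def rpow_1_base vec_eq_iff)

lemma charmap_rmat_id:
  assumes "g \<in> torus" shows "charmap rmat_id g = g"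
proof -
  have "chi (rmat_id i) g = (\<Prod>k\<in>UNIV. if k = i then g $ i else 1)" for i
    unfolding chi_def rmat_id_def
    by (rule prod.cong) (use assms in \<open>auto simp: torus_def rpow_unit_exponent rpow_zero_exponent\<close>)
  then show ?thesis by (simp add: charmap_def vec_eq_iff)
qed

lemma charmap_charmap:
  assumes "g \<in> torus" shows "charmap A (charmap B g) = charmap (rmatmul A B) g"
proof -
  have gk: "g $ k \<noteq> 0" for k using assms by (simp add: torus_def)
  have "chi (A i) (charmap B g) = (\<Prod>j\<in>UNIV. rpow (\<Prod>k\<in>UNIV. rpow (g $ k) (B j k)) (A i j))" for i
    by (simp add: chi_def charmap_def)
  also have "\<dots> i = (\<Prod>j\<in>UNIV. \<Prod>k\<in>UNIV. rpow (g $ k) (rmul (A i j) (B j k)))" for i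
    by (simp add: rpow_prod_base rpow_nonzero gk rpow_rpow)
  also have "\<dots> i = (\<Prod>k\<in>UNIV. \<Prod>j\<in>UNIV. rpow (g $ k) (rmul (A i j) (B j k)))" for i
    by (rule prod.swap)
  also have "\<dots> i = chi (rmatmul A B i) g" for i
    by (simp add: chi_def rmatmul_def prod_rpow_exponents gk)
  finally show ?thesis by (simp add: charmap_def vec_eq_iff)
qed

lemma faithful_iff_charmap_kernel: "faithful al \<longleftrightarrow> (\<forall>g\<in>torus. charmap al g = 1 \<longrightarrow> g = 1)"
proof -
  have "(\<forall>z. act al g z = z) \<longleftrightarrow> charmap al g = 1" for g
  proof
    assume "\<forall>z. act al g z = z"
    then have "act al g 1 = 1" by blast
    then show "charmap al g = 1" by (simp add: vec_eq_iff act_nth)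
  qed (simp add: vec_eq_iff act_nth)
  then show ?thesis by (simp add: faithful_def)
qed

lemma rmat_invertible_imp_faithful:
  assumes "rmat_invertible al" shows "faithful al"
proof -
  obtain B where "rmatmul B al = rmat_id"
    using assms by (auto simp: rmat_invertible_def)
  then have "g = charmap B (charmap al g)" if "g \<in> torus" for g
    using that by (simp add: charmap_charmap charmap_rmat_id)
  then show ?thesis unfolding faithful_iff_charmap_kernel by (metis charmap_1)
qed

lemma matrix_mul_uminus_left: "(- A :: 'a::ring_1 ^ 'n ^ 'm) ** B = - (A ** B)"
  by (simp add: vec_eq_iff matrix_matrix_mult_def sum_negf)

lemma matrix_mul_uminus_right: "(A :: 'a::ring_1 ^ 'n ^ 'm) ** (- B) = - (A ** B)"
  by (simp add: vec_eq_iff matrix_matrix_mult_def sum_negf)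

definition rmat_b :: "('n::finite \<Rightarrow> 'n \<Rightarrow> Relt) \<Rightarrow> real ^ 'n ^ 'n" where
  "rmat_b A = (\<chi> i k. Re (fst (A i k)))"

definition rmat_c :: "('n::finite \<Rightarrow> 'n \<Rightarrow> Relt) \<Rightarrow> real ^ 'n ^ 'n" where
  "rmat_c A = (\<chi> i k. Im (fst (A i k)))"

definition rmat_v :: "('n::finite \<Rightarrow> 'n \<Rightarrow> Relt) \<Rightarrow> real ^ 'n ^ 'n" where
  "rmat_v A = (\<chi> i k. of_int (snd (A i k)))"

lemma rmat_eq_iff: "A = A' \<longleftrightarrow> rmat_b A = rmat_b A' \<and> rmat_c A = rmat_c A' \<and> rmat_v A = rmat_v A'"
  by (auto simp: rmat_b_def rmat_c_def rmat_v_def vec_eq_iff fun_eq_iff prod_eq_iff complex_eq_iff)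

lemma rmat_b_rmatmul: "rmat_b (rmatmul A B) = rmat_b A ** rmat_b B"
  by (simp add: vec_eq_iff rmat_b_def rmatmul_def rmul_def matrix_matrix_mult_def Re_sum)

lemma rmat_c_rmatmul: "rmat_c (rmatmul A B) = rmat_c A ** rmat_b B + rmat_v A ** rmat_c B"
  by (simp add: vec_eq_iff rmat_b_def rmat_c_def rmat_v_def rmatmul_def rmul_def
      matrix_matrix_mult_def Im_sum sum.distrib)

lemma rmat_v_rmatmul: "rmat_v (rmatmul A B) = rmat_v A ** rmat_v B"
  by (simp add: vec_eq_iff rmat_v_def rmatmul_def rmul_def matrix_matrix_mult_def)

lemma rmat_blocks_rmat_id: "rmat_b rmat_id = mat 1" "rmat_c rmat_id = 0" "rmat_v rmat_id = mat 1"
  by (simp_all add: vec_eq_iff rmat_b_def rmat_c_def rmat_v_def rmat_id_def mat_def)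

lemma rmatmul_eq_rmat_id_iff:
  "rmatmul A B = rmat_id \<longleftrightarrow>
     rmat_b A ** rmat_b B = mat 1 \<and> rmat_c A ** rmat_b B + rmat_v A ** rmat_c B = 0 \<and>
     rmat_v A ** rmat_v B = mat 1"
  by (simp add: rmat_eq_iff rmat_b_rmatmul rmat_c_rmatmul rmat_v_rmatmul rmat_blocks_rmat_id)

lemma rmat_invertible_if_blocks:
  assumes "invertible (rmat_b A)" and W: "W ** rmat_v A = mat 1" and "\<forall>i k. W $ i $ k \<in> \<int>"
  shows "rmat_invertible A"
proof -
  obtain Bi where Bi: "Bi ** rmat_b A = mat 1" "rmat_b A ** Bi = mat 1"
    using assms(1) by (auto simp: invertible_def)
  have W': "rmat_v A ** W = mat 1" using W matrix_left_right_inverse by blast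
  define D where "D = - (W ** (rmat_c A ** Bi))"
  define B where "B = (\<lambda>i k. (Complex (Bi $ i $ k) (D $ i $ k), \<lfloor>W $ i $ k\<rfloor>))"
  have "rmat_b B = Bi" "rmat_c B = D" "rmat_v B = W"
    using assms(3) by (auto simp: B_def rmat_b_def rmat_c_def rmat_v_def vec_eq_iff elim: Ints_cases)
  moreover have "rmat_c A ** Bi + rmat_v A ** D = 0"
    by (simp add: D_def matrix_mul_uminus_right matrix_mul_assoc W')
  moreover have "D ** rmat_b A + W ** rmat_c A = 0"
    by (simp add: D_def matrix_mul_uminus_left Bi flip: matrix_mul_assoc)
  ultimately show ?thesis
    unfolding rmat_invertible_def rmatmul_eq_rmat_id_iff using Bi W W' by metis
qed

definition exp_coords :: "real ^ 'n \<Rightarrow> real ^ 'n \<Rightarrow> complex ^ 'n" where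
  "exp_coords x t = (\<chi> k. exp (Complex (x $ k) (t $ k)))"

definition two_pi_lattice :: "(real ^ 'n) set" where
  "two_pi_lattice = {t. \<forall>k. \<exists>n::int. t $ k = of_int (2 * n) * pi}"

lemma exp_coords_in_torus: "exp_coords x t \<in> torus"
  by (simp add: exp_coords_def torus_def)

lemma exp_coords_eq_1_iff: "exp_coords x t = 1 \<longleftrightarrow> x = 0 \<and> t \<in> two_pi_lattice"
  by (auto simp: exp_coords_def two_pi_lattice_def vec_eq_iff exp_eq_1)

lemma rpow_exp_Complex:
  "rpow (exp (Complex a t)) mu = exp (Complex (Re (fst mu) * a) (Im (fst mu) * a + of_int (snd mu) * t))"
proof -
  have "Complex a t = of_real a + \<i> * of_real t" by (simp add: complex_eq_iff)
  then have "exp (Complex a t) / of_real (exp a) = exp (\<i> * of_real t)"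
    by (simp add: exp_add exp_of_real)
  then have "rpow (exp (Complex a t)) mu = exp (fst mu * of_real a) * exp (of_int (snd mu) * (\<i> * of_real t))"
    by (simp add: rpow_def exp_power_int)
  also have "\<dots> = exp (Complex (Re (fst mu) * a) (Im (fst mu) * a + of_int (snd mu) * t))"
    by (simp only: exp_add[symmetric]) (rule arg_cong[where f = exp], simp add: complex_eq_iff)
  finally show ?thesis .
qed

lemma charmap_exp_coords:
  "charmap A (exp_coords x t) = exp_coords (rmat_b A *v x) (rmat_c A *v x + rmat_v A *v t)"
proof -
  have "chi (A i) (exp_coords x t)
      = exp (\<Sum>k\<in>UNIV. Complex (Re (fst (A i k)) * x $ k)
                                (Im (fst (A i k)) * x $ k + of_int (snd (A i k)) * t $ k))" for i
    by (simp add: chi_def exp_coords_def rpow_exp_Complex exp_sum)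
  also have "\<dots> i = exp (Complex ((rmat_b A *v x) $ i) ((rmat_c A *v x + rmat_v A *v t) $ i))" for i
    by (rule arg_cong[where f = exp])
      (simp add: complex_eq_iff rmat_b_def rmat_c_def rmat_v_def matrix_vector_mult_def sum.distrib)
  finally show ?thesis
    by (simp add: charmap_def exp_coords_def vec_eq_iff)
qed

lemma faithful_exp_coords_kernel:
  assumes "faithful A" "rmat_b A *v x = 0" "rmat_c A *v x + rmat_v A *v t \<in> two_pi_lattice"
  shows "x = 0" "t \<in> two_pi_lattice"
proof -
  have "charmap A (exp_coords x t) = 1"
    using assms(2,3) by (simp add: charmap_exp_coords exp_coords_eq_1_iff)
  then have "exp_coords x t = 1"
    using assms(1) exp_coords_in_torus unfolding faithful_iff_charmap_kernel by blast
  then show "x = 0" "t \<in> two_pi_lattice" by (simp_all add: exp_coords_eq_1_iff)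
qed

lemma faithful_rmat_v_injective:
  assumes "faithful A" "rmat_v A *v t = 0" shows "t = 0"
proof (rule ccontr)
  assume "t \<noteq> 0"
  then obtain k where k: "t $ k \<noteq> 0" by (auto simp: vec_eq_iff)
  define s where "s = (pi / t $ k) *\<^sub>R t"
  have "rmat_c A *v 0 + rmat_v A *v s \<in> two_pi_lattice"
    using assms(2) by (simp add: s_def matrix_vector_mult_scaleR two_pi_lattice_def exI[of _ 0])
  from faithful_exp_coords_kernel(2)[OF assms(1) _ this] obtain n :: int
    where "s $ k = of_int (2 * n) * pi" by (auto simp: two_pi_lattice_def)
  then have "real_of_int (2 * n) = 1" using k by (simp add: s_def)
  then show False by presburger
qed

lemma faithful_rmat_v_inverse_Ints:
  assumes "faithful A" "rmat_v A ** W = mat 1" shows "W $ k $ j \<in> \<int>"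
proof -
  define t where "t = (2 * pi) *\<^sub>R (W *v axis j 1)"
  have "rmat_v A *v t = (2 * pi) *\<^sub>R axis j 1"
    by (simp add: t_def matrix_vector_mult_scaleR matrix_vector_mul_assoc assms(2))
  then have "rmat_c A *v 0 + rmat_v A *v t \<in> two_pi_lattice"
    unfolding two_pi_lattice_def by (auto simp: axis_def intro: exI[of _ "if _ = j then 1 else 0"])
  from faithful_exp_coords_kernel(2)[OF assms(1) _ this] obtain n :: int
    where "t $ k = of_int (2 * n) * pi" by (auto simp: two_pi_lattice_def)
  moreover have "t $ k = 2 * pi * W $ k $ j"
    by (simp add: t_def matrix_vector_mult_def axis_def mult_delta_right)
  ultimately have "W $ k $ j = of_int n" by simp
  then show ?thesis by simp
qed

lemma faithful_rmat_b_injective: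
  assumes "faithful A" "rmat_v A ** W = mat 1" "rmat_b A *v x = 0" shows "x = 0"
proof -
  have "rmat_v A *v (W *v (rmat_c A *v x)) = rmat_c A *v x"
    by (simp only: matrix_vector_mul_assoc matrix_mul_assoc assms(2) matrix_mul_lid)
  then have "rmat_c A *v x + rmat_v A *v (- (W *v (rmat_c A *v x))) \<in> two_pi_lattice"
    by (simp add: linear_neg[OF matrix_vector_mul_linear] two_pi_lattice_def exI[of _ 0])
  then show ?thesis using faithful_exp_coords_kernel(1)[OF assms(1,3)] by blast
qed

lemma faithful_imp_rmat_invertible:
  assumes "faithful A" shows "rmat_invertible A"
proof -
  obtain W where W: "W ** rmat_v A = mat 1"
    using faithful_rmat_v_injective[OF assms] matrix_left_invertible_ker by blast
  then have W': "rmat_v A ** W = mat 1" using matrix_left_right_inverse by blast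
  have "invertible (rmat_b A)"
    unfolding invertible_left_inverse matrix_left_invertible_ker
    using faithful_rmat_b_injective[OF assms W'] by blast
  then show ?thesis
    using rmat_invertible_if_blocks W faithful_rmat_v_inverse_Ints[OF assms W'] by blast
qed

definition zero_coords :: "'a::zero ^ 'n \<Rightarrow> 'n set" where
  "zero_coords z = {i. z $ i = 0}"

lemma torus_eq_no_zero_coords: "torus = {w. zero_coords w = {}}"
  by (auto simp: torus_def zero_coords_def)

lemma orbit_eq_same_zero_coords:
  fixes z :: "complex ^ 'n::finite"
  assumes "rmatmul al B = rmat_id"
  shows "orbit al z = {w. zero_coords w = zero_coords z}"
proof
  show "orbit al z \<subseteq> {w. zero_coords w = zero_coords z}"
    by (auto simp: orbit_def zero_coords_def act_nth charmap_def chi_nonzero)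
next
  show "{w. zero_coords w = zero_coords z} \<subseteq> orbit al z"
  proof
    fix w :: "complex ^ 'n" assume w: "w \<in> {w. zero_coords w = zero_coords z}"
    define q where "q = (\<chi> i. if z $ i = 0 then 1 else w $ i / z $ i)"
    have q: "q \<in> torus" using w by (auto simp: q_def torus_def zero_coords_def)
    then have "charmap al (charmap B q) = q"
      using assms by (simp add: charmap_charmap charmap_rmat_id)
    then have "act al (charmap B q) z = w"
      using w by (auto simp: vec_eq_iff act_nth q_def zero_coords_def)
    then show "w \<in> orbit al z"
      using charmap_in_torus[OF q] by (force simp: orbit_def)
  qed
qed

lemma continuous_on_chi: "continuous_on torus (chi a)"
  unfolding chi_def rpow_def torus_def by (auto intro!: continuous_intros)

lemma continuous_on_charmap: "continuous_on torus (charmap A)"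
  unfolding charmap_def by (auto intro!: continuous_intros continuous_on_compose2[OF continuous_on_chi])

lemma homeomorphism_orbit_map:
  assumes B: "rmatmul al B = rmat_id" "rmatmul B al = rmat_id" and z: "z \<in> torus"
  shows "homeomorphism torus torus (\<lambda>g. act al g z) (\<lambda>w. charmap B (\<chi> i. w $ i / z $ i))"
proof (rule homeomorphismI)
  have zk: "z $ k \<noteq> 0" for k using z by (simp add: torus_def)
  have div_z: "(\<chi> i. w $ i / z $ i) \<in> torus" if "w \<in> torus" for w
    using that zk by (simp add: torus_def)
  have act_eq: "act al g z = (\<chi> i. charmap al g $ i * z $ i)" for g
    by (simp add: vec_eq_iff act_nth)
  show "continuous_on torus (\<lambda>g. act al g z)"
    unfolding act_eq
    by (intro continuous_on_vec_lambda continuous_on_mult continuous_on_const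
        continuous_on_component[OF continuous_on_charmap])
  have "continuous_on torus (\<lambda>w::complex ^ 'a. \<chi> i. w $ i / z $ i)"
    by (intro continuous_on_vec_lambda continuous_on_divide continuous_on_const)
      (auto intro: continuous_on_component simp: zk)
  then show "continuous_on torus (\<lambda>w. charmap B (\<chi> i. w $ i / z $ i))"
    by (rule continuous_on_compose2[OF continuous_on_charmap]) (use div_z in auto)
  show "(\<lambda>g. act al g z) ` torus \<subseteq> torus"
    using zk by (auto simp: torus_def act_nth charmap_def chi_nonzero)
  show "(\<lambda>w. charmap B (\<chi> i. w $ i / z $ i)) ` torus \<subseteq> torus"
    using div_z charmap_in_torus by auto
  show "charmap B (\<chi> i. act al g z $ i / z $ i) = g" if "g \<in> torus" for g
  proof -
    have "(\<chi> i. act al g z $ i / z $ i) = charmap al g" using zk by (simp add: vec_eq_iff act_nth)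
    then show ?thesis using that B(2) by (simp add: charmap_charmap charmap_rmat_id)
  qed
  show "act al (charmap B (\<chi> i. w $ i / z $ i)) z = w" if "w \<in> torus" for w
  proof -
    have "charmap al (charmap B (\<chi> i. w $ i / z $ i)) = (\<chi> i. w $ i / z $ i)"
      using div_z[OF that] B(1) by (simp add: charmap_charmap charmap_rmat_id)
    then show ?thesis using zk by (simp add: vec_eq_iff act_nth)
  qed
qed

lemma open_torus: "open (torus :: (complex ^ 'n::finite) set)"
proof -
  have "torus = (\<Inter>k. {g :: complex ^ 'n. g $ k \<noteq> 0})" by (auto simp: torus_def)
  moreover have "open {g :: complex ^ 'n. g $ k \<noteq> 0}" for k
    by (rule open_Collect_neq) (auto intro!: continuous_intros)
  then have "open (\<Inter>k. {g :: complex ^ 'n. g $ k \<noteq> 0})" by (intro open_INT) auto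
  ultimately show ?thesis by simp
qed

lemma closure_torus: "closure (torus :: (complex ^ 'n::finite) set) = UNIV"
proof -
  have "\<exists>y\<in>torus. dist y w < e" if "e > 0" for w :: "complex ^ 'n" and e
  proof
    define d where "d = e / (2 * real CARD('n))"
    have d: "d > 0" using \<open>e > 0\<close> by (simp add: d_def)
    define y where "y = (\<chi> k. if w $ k = 0 then of_real d else w $ k)"
    show "y \<in> torus" using d by (simp add: y_def torus_def)
    have "dist y w \<le> (\<Sum>k\<in>UNIV. norm ((y - w) $ k))"
      unfolding dist_norm norm_vec_def by (rule L2_set_le_sum) simp
    also have "\<dots> \<le> (\<Sum>k\<in>(UNIV :: 'n set). d)"
      by (rule sum_mono) (use d in \<open>simp add: y_def\<close>)
    also have "\<dots> < e" using \<open>e > 0\<close> by (simp add: d_def)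
    finally show "dist y w < e" .
  qed
  then show ?thesis by (auto simp: closure_approachable)
qed

lemma aff_dim_coordinate_hyperplane_le:
  "aff_dim {w :: complex ^ 'n::finite. w $ i = 0} \<le> 2 * int CARD('n) - 2"
proof -
  let ?H = "{w :: complex ^ 'n. w $ i = 0}"
  let ?a = "axis i (1::complex) :: complex ^ 'n"
  let ?H1 = "{w :: complex ^ 'n. ?a \<bullet> w = 0}"
  have inner_a: "?a \<bullet> w = Re (w $ i)" for w :: "complex ^ 'n"
  proof -
    have "(?a $ j) \<bullet> (w $ j) = (if j = i then Re (w $ i) else 0)" for j
      by (simp add: axis_def inner_complex_def)
    then show ?thesis by (simp add: inner_vec_def)
  qed
  have "subspace ?H" "subspace ?H1"
    by (simp_all add: subspace_def inner_a)
  then have "affine hull ?H = ?H" "affine hull ?H1 = ?H1"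
    by (simp_all add: affine_hull_eq subspace_imp_affine)
  moreover have "?H \<subset> ?H1"
  proof
    show "?H \<subseteq> ?H1" by (auto simp: inner_a)
    have "axis i \<i> \<in> ?H1 - ?H" using inner_a[of "axis i \<i>"] by (simp add: axis_def)
    then show "?H \<noteq> ?H1" by blast
  qed
  ultimately have "aff_dim ?H < aff_dim ?H1"
    by (metis aff_dim_psubset)
  also have "aff_dim ?H1 = int (DIM(complex ^ 'n) - 1)"
    by (rule aff_dim_hyperplane) (simp add: vec_eq_iff axis_def)
  finally show ?thesis by simp
qed

theorem lemma2p5:
  fixes al :: "'n::finite \<Rightarrow> 'n \<Rightarrow> complex \<times> int"
  shows "(faithful al \<longleftrightarrow> rmat_invertible al) \<and>
         (faithful al \<longrightarrow>
            finite (orbits al) \<and>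
            (\<exists>U\<in>orbits al. open U \<and> closure U = UNIV \<and>
               (\<forall>V\<in>orbits al. open V \<and> closure V = UNIV \<longrightarrow> V = U) \<and>
               (\<forall>z\<in>U. \<exists>h. homeomorphism torus U (\<lambda>g. act al g z) h) \<and>
               (\<forall>V\<in>orbits al. V \<noteq> U \<longrightarrow> aff_dim V \<le> 2 * int CARD('n) - 2)))"
proof (intro conjI impI)
  show "faithful al \<longleftrightarrow> rmat_invertible al"
    using rmat_invertible_imp_faithful faithful_imp_rmat_invertible by blast
  assume "faithful al"
  then obtain B where B: "rmatmul al B = rmat_id" "rmatmul B al = rmat_id"
    using faithful_imp_rmat_invertible by (auto simp: rmat_invertible_def)
  have orbits: "orbits al = (\<lambda>z :: complex ^ 'n. {w. zero_coords w = zero_coords z}) ` UNIV"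
    by (simp add: orbits_def orbit_eq_same_zero_coords[OF B(1)])
  have torus_orbit: "torus \<in> orbits al"
    unfolding orbits torus_eq_no_zero_coords by (rule image_eqI[of _ _ 1]) (auto simp: zero_coords_def)
  have low_dim: "aff_dim V \<le> 2 * int CARD('n) - 2" if V_orbit: "V \<in> orbits al" and not_torus: "V \<noteq> torus" for V
  proof -
    obtain z :: "complex ^ 'n" where V: "V = {w. zero_coords w = zero_coords z}"
      using V_orbit unfolding orbits by blast
    then obtain i where "z $ i = 0"
      using not_torus by (auto simp: torus_eq_no_zero_coords zero_coords_def)
    then have "V \<subseteq> {w. w $ i = 0}" by (auto simp: V zero_coords_def)
    then show ?thesis using aff_dim_subset aff_dim_coordinate_hyperplane_le order.trans by blast
  qed
  have "orbits al \<subseteq> (\<lambda>S. {w :: complex ^ 'n. zero_coords w = S}) ` UNIV"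
    unfolding orbits by auto
  then show "finite (orbits al)" by (rule finite_subset) simp
  show "\<exists>U\<in>orbits al. open U \<and> closure U = UNIV \<and>
          (\<forall>V\<in>orbits al. open V \<and> closure V = UNIV \<longrightarrow> V = U) \<and>
          (\<forall>z\<in>U. \<exists>h. homeomorphism torus U (\<lambda>g. act al g z) h) \<and>
          (\<forall>V\<in>orbits al. V \<noteq> U \<longrightarrow> aff_dim V \<le> 2 * int CARD('n) - 2)"
  proof (intro bexI[OF _ torus_orbit] conjI ballI impI)
    fix V assume V: "V \<in> orbits al" "open V \<and> closure V = UNIV"
    then have "V \<noteq> {}" by auto
    with V have "aff_dim V = 2 * int CARD('n)" by (simp add: aff_dim_open)
    then show "V = torus" using low_dim[OF V(1)] by fastforce
  qed (use open_torus closure_torus homeomorphism_orbit_map[OF B] low_dim in auto)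
qed

end
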